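(* Let $T:{\mathcal{Q}Sym}\to{\mathcal{Q}Sym}$ be the linear map with $T(F_\alpha)=F_{\tilde\alpha}$ for every composition $\alpha$. Then \[\zeta_+\circ T=\zeta_+\quad\text{and}\quad \zeta_-\circ T=\bigl((\zeta^{-1})_-\bigr)^{-1}.\]
   Context: $\Bbbk$ is a field of characteristic $\neq2$. For a composition $\alpha=(a_1,\ldots,a_k)$, $\tilde\alpha=(a_k,\ldots,a_1)$ is its reversal. ${\mathcal{Q}Sym}$ is the graded connected Hopf algebra of quasi-symmetric functions over $\Bbbk$, with monomial basis $M_\alpha=\sum_{i_1<\cdots<i_k}x_{i_1}^{a_1}\cdots x_{i_k}^{a_k}$, fundamental basis $F_\alpha=\sum_{\beta\ge\alpha}M_\beta$ ($\beta\ge\alpha$: $\beta$ refines $\alpha$), ordinary product, coproduct $\Delta(M_\alpha)=\sum_{i=0}^kM_{(a_1,\ldots,a_i)}\otimes M_{(a_{i+1},\ldots,a_k)}$. Convolution $\rho\psi=m\circ(\rho\otimes\psi)\circ\Delta$; characters (algebra morphisms to $\Bbbk$) form a group under convolution, the inverse of $\varphi$ being denoted $\varphi^{-1}$. For a functional $\varphi$, $\bar\varphi(h)=(-1)^n\varphi(h)$ on homogeneous $h$ of degree $n$; $\varphi$ is even if $\bar\varphi=\varphi$ and odd if $\bar\varphi=\varphi^{-1}$. Every character $\varphi$ factors uniquely as $\varphi=\varphi_+\varphi_-$ with $\varphi_+$ an even character and $\varphi_-$ an odd character. $\zeta$ is the universal character $\zeta(f)=f(1,0,0,\ldots)$ (so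 $\zeta(F_\alpha)=1$ if $\alpha=()$ or $\alpha=(n)$, else $0$); $\zeta_\pm$ are its even and odd parts, and $(\zeta^{-1})_\pm$ are the even and odd parts of its convolution inverse $\zeta^{-1}$. *)

theory Defs
  imports Main "HOL-Library.Multiset"
begin

text \<open>A linear functional on QSym is
  represented by its values on the monomial basis: phi alpha stands for phi(M_alpha);
  by convention it is 0 on lists that are not compositions.\<close>

definition is_comp :: "nat list \<Rightarrow> bool" where
  "is_comp \<alpha> \<longleftrightarrow> (\<forall>a\<in>set \<alpha>. 0 < a)"

text \<open>Quasi-shuffle: M_alpha * M_beta = sum over gamma in qsh alpha beta of M_gamma.\<close>
fun qsh :: "nat list \<Rightarrow> nat list \<Rightarrow> nat list multiset" where
  "qsh [] v = {#v#}"
| "qsh u [] = {#u#}"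
| "qsh (a # u) (b # v) =
     image_mset (Cons a) (qsh u (b # v)) + image_mset (Cons b) (qsh (a # u) v)
     + image_mset (Cons (a + b)) (qsh u v)"

definition is_functional :: "(nat list \<Rightarrow> 'a::field) \<Rightarrow> bool" where
  "is_functional \<phi> \<longleftrightarrow> (\<forall>\<alpha>. \<not> is_comp \<alpha> \<longrightarrow> \<phi> \<alpha> = 0)"

text \<open>Convolution via the deconcatenation coproduct.\<close>
definition conv :: "(nat list \<Rightarrow> 'a::field) \<Rightarrow> (nat list \<Rightarrow> 'a) \<Rightarrow> nat list \<Rightarrow> 'a" where
  "conv \<rho> \<psi> \<alpha> = (if is_comp \<alpha> then (\<Sum>i\<le>length \<alpha>. \<rho> (take i \<alpha>) * \<psi> (drop i \<alpha>)) else 0)"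

definition counit :: "nat list \<Rightarrow> 'a::field" where
  "counit \<alpha> = (if \<alpha> = [] then 1 else 0)"

definition is_character :: "(nat list \<Rightarrow> 'a::field) \<Rightarrow> bool" where
  "is_character \<phi> \<longleftrightarrow> is_functional \<phi> \<and> \<phi> [] = 1 \<and>
     (\<forall>\<alpha> \<beta>. is_comp \<alpha> \<longrightarrow> is_comp \<beta> \<longrightarrow> \<phi> \<alpha> * \<phi> \<beta> = (\<Sum>\<gamma>\<in>#qsh \<alpha> \<beta>. \<phi> \<gamma>))"

definition char_inv :: "(nat list \<Rightarrow> 'a::field) \<Rightarrow> nat list \<Rightarrow> 'a" where
  "char_inv \<phi> = (THE \<psi>. is_character \<psi> \<and> conv \<phi> \<psi> = counit \<and> conv \<psi> \<phi> = counit)"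

text \<open>bar phi (h) = (-1)^n phi(h) on homogeneous h of degree n; M_alpha has degree |alpha|.\<close>
definition bar :: "(nat list \<Rightarrow> 'a::field) \<Rightarrow> nat list \<Rightarrow> 'a" where
  "bar \<phi> \<alpha> = (-1) ^ sum_list \<alpha> * \<phi> \<alpha>"

definition is_even :: "(nat list \<Rightarrow> 'a::field) \<Rightarrow> bool" where
  "is_even \<phi> \<longleftrightarrow> bar \<phi> = \<phi>"

definition is_odd :: "(nat list \<Rightarrow> 'a::field) \<Rightarrow> bool" where
  "is_odd \<phi> \<longleftrightarrow> bar \<phi> = char_inv \<phi>"

definition even_part :: "(nat list \<Rightarrow> 'a::field) \<Rightarrow> nat list \<Rightarrow> 'a" where
  "even_part \<phi> = (THE p. is_character p \<and> is_even p \<and>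
      (\<exists>m. is_character m \<and> is_odd m \<and> \<phi> = conv p m))"

definition odd_part :: "(nat list \<Rightarrow> 'a::field) \<Rightarrow> nat list \<Rightarrow> 'a" where
  "odd_part \<phi> = (THE m. is_character m \<and> is_odd m \<and>
      (\<exists>p. is_character p \<and> is_even p \<and> \<phi> = conv p m))"

text \<open>Universal character zeta(f) = f(1,0,0,...): zeta(M_alpha) = 1 iff alpha has at most one part.\<close>
definition zeta :: "nat list \<Rightarrow> 'a::field" where
  "zeta \<alpha> = (if is_comp \<alpha> \<and> length \<alpha> \<le> 1 then 1 else 0)"

definition psums :: "nat list \<Rightarrow> nat set" where
  "psums \<alpha> = {sum_list (take i \<alpha>) | i. i \<le> length \<alpha>}"

definition refines :: "nat list \<Rightarrow> nat list \<Rightarrow> bool" where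
  "refines \<beta> \<alpha> \<longleftrightarrow> sum_list \<beta> = sum_list \<alpha> \<and> psums \<alpha> \<subseteq> psums \<beta>"

text \<open>Value of a functional on the fundamental basis element F_alpha = sum_{beta \<ge> alpha} M_beta.\<close>
definition evalF :: "(nat list \<Rightarrow> 'a::field) \<Rightarrow> nat list \<Rightarrow> 'a" where
  "evalF \<phi> \<alpha> = (\<Sum>\<beta>\<in>{\<beta>. is_comp \<beta> \<and> refines \<beta> \<alpha>}. \<phi> \<beta>)"

end

theory Submission
  imports Defs
begin

text \<open>Characters of QSym form a group under convolution, and \<open>bar\<close> is an involutive
  automorphism of it. When 2 is invertible, the decomposition \<phi> = \<phi>_+ \<phi>_- is unique, because
  \<phi>_- is a square root of (bar \<phi>)^-1 \<phi> and square roots of characters are unique.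
  Reversal commutes with refinement, so T reverses the monomial basis as well and
  \<psi> \<mapsto> \<psi> \<circ> T is an anti-automorphism of the character group that commutes with \<open>bar\<close> and
  fixes \<zeta>. Hence \<psi> \<mapsto> (\<psi> \<circ> T)^-1 is an automorphism commuting with \<open>bar\<close> that sends \<zeta> to
  \<zeta>^-1, so it maps \<zeta>_+ and \<zeta>_- to (\<zeta>^-1)_+ and (\<zeta>^-1)_-. This is the second identity; the
  first follows from (\<phi>^-1)_+ = (\<phi>_+)^-1, whose odd partner is the conjugate
  \<phi>_+ (\<phi>_-)^-1 (\<phi>_+)^-1.\<close>

section \<open>Quasi-shuffles\<close>

lemma is_comp_simps [simp]:
  "is_comp []" "is_comp (a # u) \<longleftrightarrow> 0 < a \<and> is_comp u"
  "is_comp (rev u) \<longleftrightarrow> is_comp u"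
  by (auto simp: is_comp_def)

lemma is_comp_take [simp]: "is_comp u \<Longrightarrow> is_comp (take i u)"
  and is_comp_drop [simp]: "is_comp u \<Longrightarrow> is_comp (drop i u)"
  by (auto simp: is_comp_def dest: in_set_takeD in_set_dropD)

lemma qsh_Nil2 [simp]: "qsh u [] = {#u#}"
  by (cases u) auto

lemma mem_qsh_ConsE:
  assumes "\<gamma> \<in># qsh (a # u) (b # v)"
  obtains x where "x \<in># qsh u (b # v)" "\<gamma> = a # x"
    | x where "x \<in># qsh (a # u) v" "\<gamma> = b # x"
    | x where "x \<in># qsh u v" "\<gamma> = (a + b) # x"
  using assms by auto

lemma is_comp_qsh: "\<gamma> \<in># qsh u v \<Longrightarrow> is_comp u \<Longrightarrow> is_comp v \<Longrightarrow> is_comp \<gamma>"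
  by (induction u v arbitrary: \<gamma> rule: qsh.induct) (auto elim!: mem_qsh_ConsE)

lemma sum_list_qsh: "\<gamma> \<in># qsh u v \<Longrightarrow> sum_list \<gamma> = sum_list u + sum_list v"
  by (induction u v arbitrary: \<gamma> rule: qsh.induct) (auto elim!: mem_qsh_ConsE)

lemma length_qsh: "\<gamma> \<in># qsh u v \<Longrightarrow> max (length u) (length v) \<le> length \<gamma>"
  by (induction u v arbitrary: \<gamma> rule: qsh.induct) (force elim!: mem_qsh_ConsE)+

lemma qsh_commute: "qsh u v = qsh v u"
  by (induction u v rule: qsh.induct) (auto simp: add_ac)

lemma qsh_single_snoc:
  "qsh [a] (v @ [b]) = image_mset (\<lambda>\<gamma>. \<gamma> @ [a]) (qsh [] (v @ [b]))
     + image_mset (\<lambda>\<gamma>. \<gamma> @ [b]) (qsh [a] v) + image_mset (\<lambda>\<gamma>. \<gamma> @ [a + b]) (qsh [] v)"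
  by (induction v) (simp_all add: multiset.map_comp comp_def add_ac)

lemma qsh_snoc:
  "qsh (u @ [a]) (v @ [b]) = image_mset (\<lambda>\<gamma>. \<gamma> @ [a]) (qsh u (v @ [b]))
     + image_mset (\<lambda>\<gamma>. \<gamma> @ [b]) (qsh (u @ [a]) v) + image_mset (\<lambda>\<gamma>. \<gamma> @ [a + b]) (qsh u v)"
proof (induction u v rule: qsh.induct)
  case (1 v)
  then show ?case using qsh_single_snoc by simp
next
  case (2 c u)
  show ?case
    using qsh_single_snoc[of b "c # u" a] qsh_commute[of "[b]"] qsh_commute[of "c # u @ [a]"]
    by (simp add: add_ac)
next
  case (3 c u d v)
  then show ?case by (simp add: multiset.map_comp comp_def add_ac)
qed

lemma qsh_rev: "qsh (rev u) (rev v) = image_mset rev (qsh u v)"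
  by (induction u v rule: qsh.induct) (simp_all add: qsh_snoc multiset.map_comp comp_def)

lemma sum_list_take_drop: "sum_list (take i \<alpha>) + sum_list (drop i \<alpha>) = sum_list \<alpha>"
  by (simp flip: sum_list_append)

lemma sum_deconcat_Cons:
  "(\<Sum>i\<le>length (c # x). f (take i (c # x)) (drop i (c # x)))
     = f [] (c # x) + (\<Sum>i\<le>length x. f (c # take i x) (drop i x))"
  by (simp only: length_Cons sum.atMost_Suc_shift) simp

text \<open>The bialgebra axiom \<Delta>(M_u M_v) = \<Delta>(M_u) \<Delta>(M_v), paired with an arbitrary function
  on the tensor square.\<close>

lemma sum_qsh_deconcat:
  "(\<Sum>\<gamma>\<in>#qsh u v. \<Sum>i\<le>length \<gamma>. f (take i \<gamma>) (drop i \<gamma>) :: 'a::comm_monoid_add)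
   = (\<Sum>j\<le>length u. \<Sum>k\<le>length v. \<Sum>x\<in>#qsh (take j u) (take k v).
        \<Sum>y\<in>#qsh (drop j u) (drop k v). f x y)"
proof (induction u v arbitrary: f rule: qsh.induct)
  case (3 a u b v)
  txt \<open>A deconcatenation of a word in qsh (a # u) (b # v) either has empty first part or a
    first part starting with a, b or a + b; on the right this is the split into
    j = 0 or k = 0 versus j, k > 0.\<close>
  define U where "U = a # u"
  define V where "V = b # v"
  define T where
    "T j k = (\<Sum>x\<in>#qsh (take j U) (take k V). \<Sum>y\<in>#qsh (drop j U) (drop k V). f x y)" for j k
  define A where
    "A j k = (\<Sum>x\<in>#qsh (take j u) (b # take k v). \<Sum>y\<in>#qsh (drop j u) (drop k v). f (a # x) y)"
    for j k
  define B where
    "B j k = (\<Sum>x\<in>#qsh (a # take j u) (take k v). \<Sum>y\<in>#qsh (drop j u) (drop k v). f (b # x) y)"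
    for j k
  define C where
    "C j k = (\<Sum>x\<in>#qsh (take j u) (take k v). \<Sum>y\<in>#qsh (drop j u) (drop k v). f ((a + b) # x) y)"
    for j k
  define L where "L c X = (\<Sum>x\<in>#X. \<Sum>i\<le>length x. f (c # take i x) (drop i x))" for c X
  have T00: "T 0 0 = (\<Sum>x\<in>#qsh u V. f [] (a # x)) + (\<Sum>x\<in>#qsh U v. f [] (b # x))
      + (\<Sum>x\<in>#qsh u v. f [] ((a + b) # x))"
    unfolding T_def U_def V_def by (simp add: multiset.map_comp comp_def)
  have T0S: "T 0 (Suc k) = (\<Sum>y\<in>#qsh U (drop k v). f (b # take k v) y)" for k
    unfolding T_def U_def V_def by simp
  have TS0: "T (Suc j) 0 = (\<Sum>y\<in>#qsh (drop j u) V. f (a # take j u) y)" for j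
    unfolding T_def U_def V_def by simp
  have TSS: "T (Suc j) (Suc k) = A j k + B j k + C j k" for j k
    unfolding T_def U_def V_def A_def B_def C_def
    by (simp add: sum_mset.distrib multiset.map_comp comp_def)
  have rhs: "(\<Sum>j\<le>length U. \<Sum>k\<le>length V. T j k)
     = T 0 0 + (\<Sum>k\<le>length v. T 0 (Suc k)) + (\<Sum>j\<le>length u. T (Suc j) 0)
       + (\<Sum>j\<le>length u. \<Sum>k\<le>length v. A j k) + (\<Sum>j\<le>length u. \<Sum>k\<le>length v. B j k)
       + (\<Sum>j\<le>length u. \<Sum>k\<le>length v. C j k)"
    unfolding U_def V_def length_Cons sum.atMost_Suc_shift TSS sum.distrib
    by (simp only: add_ac)
  have La: "L a (qsh u V) = (\<Sum>j\<le>length u. T (Suc j) 0) + (\<Sum>j\<le>length u. \<Sum>k\<le>length v. A j k)"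
    unfolding L_def V_def 3(1)[of "\<lambda>x y. f (a # x) y"] length_Cons sum.atMost_Suc_shift TS0
    by (simp add: A_def V_def sum.distrib del: sum.atMost_Suc)
  have Lb: "L b (qsh U v) = (\<Sum>k\<le>length v. T 0 (Suc k)) + (\<Sum>j\<le>length u. \<Sum>k\<le>length v. B j k)"
    unfolding L_def U_def 3(2)[of "\<lambda>x y. f (b # x) y"] length_Cons sum.atMost_Suc_shift T0S
    by (simp add: B_def U_def sum.distrib del: sum.atMost_Suc)
  have Lab: "L (a + b) (qsh u v) = (\<Sum>j\<le>length u. \<Sum>k\<le>length v. C j k)"
    unfolding L_def 3(3)[of "\<lambda>x y. f ((a + b) # x) y"] C_def by simp
  have lhs: "(\<Sum>\<gamma>\<in>#qsh U V. \<Sum>i\<le>length \<gamma>. f (take i \<gamma>) (drop i \<gamma>))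
     = T 0 0 + L a (qsh u V) + L b (qsh U v) + L (a + b) (qsh u v)"
    unfolding T00 L_def U_def V_def qsh.simps image_mset_union sum_mset.union
    by (simp only: multiset.map_comp comp_def sum_deconcat_Cons sum_mset.distrib add_ac)
  show ?case
    using lhs rhs La Lb Lab unfolding T_def U_def V_def by (simp add: add_ac)
qed simp_all

section \<open>Convolution\<close>

lemma conv_not_comp [simp]: "\<not> is_comp \<alpha> \<Longrightarrow> conv \<rho> \<psi> \<alpha> = 0"
  by (simp add: conv_def)

lemma conv_Nil: "conv \<rho> \<psi> [] = \<rho> [] * \<psi> []"
  by (simp add: conv_def)

lemma counit_simps [simp]: "counit [] = 1" "counit (a # \<alpha>) = 0"
  by (simp_all add: counit_def)

lemma counit_not_comp: "\<not> is_comp \<alpha> \<Longrightarrow> counit \<alpha> = 0"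
  by (cases \<alpha>) (auto simp: counit_def)

lemma is_functional_conv [simp]: "is_functional (conv \<rho> \<psi>)"
  by (simp add: is_functional_def)

lemma is_functional_counit [simp]: "is_functional counit"
  by (simp add: is_functional_def counit_not_comp)

lemma is_functionalD: "is_functional \<phi> \<Longrightarrow> \<not> is_comp \<alpha> \<Longrightarrow> \<phi> \<alpha> = 0"
  by (simp add: is_functional_def)

lemma conv_counit_left:
  assumes "is_functional \<phi>" shows "conv counit \<phi> = \<phi>"
proof
  fix \<alpha> :: "nat list"
  have "take (Suc i) \<alpha> \<noteq> []" if "i < length \<alpha>" for i
    using that by (cases \<alpha>) auto
  then show "conv counit \<phi> \<alpha> = \<phi> \<alpha>"
    using assms by (auto simp: conv_def sum.atMost_shift counit_def is_functionalD[OF assms])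
qed

lemma conv_counit_right:
  assumes "is_functional \<phi>" shows "conv \<phi> counit = \<phi>"
proof
  fix \<alpha> :: "nat list"
  have "drop i \<alpha> \<noteq> []" if "i < length \<alpha>" for i
    using that by simp
  then show "conv \<phi> counit \<alpha> = \<phi> \<alpha>"
    using assms
    by (auto simp: conv_def lessThan_Suc_atMost[symmetric] counit_def is_functionalD[OF assms])
qed

lemma conv_assoc: "conv (conv \<rho> \<psi>) \<chi> = conv \<rho> (conv \<psi> \<chi>)"
proof
  fix \<alpha> :: "nat list"
  show "conv (conv \<rho> \<psi>) \<chi> \<alpha> = conv \<rho> (conv \<psi> \<chi>) \<alpha>"
  proof (cases "is_comp \<alpha>")
    case True
    define n where "n = length \<alpha>"
    define g where "g i j = \<rho> (take i \<alpha>) * \<psi> (take j (drop i \<alpha>)) * \<chi> (drop (i + j) \<alpha>)" for i j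
    have "conv (conv \<rho> \<psi>) \<chi> \<alpha> = (\<Sum>k\<le>n. \<Sum>i\<le>k. g i (k - i))"
      using True
      by (auto simp: conv_def g_def n_def min_def sum_distrib_right take_drop intro!: sum.cong)
    also have "\<dots> = (\<Sum>(i, j)\<in>{(i, j). i + j \<le> n}. g i j)"
      by (rule sum.triangle_reindex_eq[symmetric])
    also have "\<dots> = (\<Sum>(i, j)\<in>(SIGMA i:{..n}. {..n - i}). g i j)"
      by (rule sum.cong) auto
    also have "\<dots> = conv \<rho> (conv \<psi> \<chi>) \<alpha>"
      using True
      by (simp add: sum.Sigma conv_def g_def n_def sum_distrib_left mult.assoc add.commute)
    finally show ?thesis .
  qed simp
qed

text \<open>Functionals on QSym \<otimes> QSym, given by their values on M_u \<otimes> M_v: \<open>conv_tensor\<close> is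
  their convolution, \<open>comp_mult \<phi>\<close> is \<phi> composed with the product and \<open>tensor \<rho> \<psi>\<close> is
  \<rho> \<otimes> \<psi>.\<close>

definition conv_tensor :: "(nat list \<Rightarrow> nat list \<Rightarrow> 'a::field) \<Rightarrow> (nat list \<Rightarrow> nat list \<Rightarrow> 'a)
    \<Rightarrow> nat list \<Rightarrow> nat list \<Rightarrow> 'a" where
  "conv_tensor X Y u v =
     (\<Sum>j\<le>length u. \<Sum>k\<le>length v. X (take j u) (take k v) * Y (drop j u) (drop k v))"

definition comp_mult :: "(nat list \<Rightarrow> 'a::field) \<Rightarrow> nat list \<Rightarrow> nat list \<Rightarrow> 'a" where
  "comp_mult \<phi> u v = (\<Sum>\<gamma>\<in>#qsh u v. \<phi> \<gamma>)"

definition tensor :: "(nat list \<Rightarrow> 'a::field) \<Rightarrow> (nat list \<Rightarrow> 'a) \<Rightarrow> nat list \<Rightarrow> nat list \<Rightarrow> 'a" where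
  "tensor \<rho> \<psi> u v = \<rho> u * \<psi> v"

lemma comp_mult_conv:
  assumes "is_comp u" "is_comp v"
  shows "comp_mult (conv \<rho> \<psi>) u v = conv_tensor (comp_mult \<rho>) (comp_mult \<psi>) u v"
proof -
  have "comp_mult (conv \<rho> \<psi>) u v
      = (\<Sum>\<gamma>\<in>#qsh u v. \<Sum>i\<le>length \<gamma>. \<rho> (take i \<gamma>) * \<psi> (drop i \<gamma>))"
    unfolding comp_mult_def using is_comp_qsh assms
    by (intro arg_cong[where f=sum_mset] image_mset_cong) (simp add: conv_def)
  also have "\<dots> = conv_tensor (comp_mult \<rho>) (comp_mult \<psi>) u v"
    unfolding sum_qsh_deconcat[where f="\<lambda>x y. \<rho> x * \<psi> y"] conv_tensor_def comp_mult_def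
      sum_mset_distrib_right
    by (simp only: sum_mset_distrib_left)
  finally show ?thesis .
qed

lemma conv_tensor_tensor:
  assumes "is_comp u" "is_comp v"
  shows "conv_tensor (tensor \<rho> \<rho>') (tensor \<psi> \<psi>') u v = conv \<rho> \<psi> u * conv \<rho>' \<psi>' v"
  using assms by (simp add: conv_tensor_def tensor_def conv_def sum_product mult_ac)

lemma conv_tensor_cong:
  assumes "\<And>x y. is_comp x \<Longrightarrow> is_comp y \<Longrightarrow> X x y = X' x y"
    and "\<And>x y. is_comp x \<Longrightarrow> is_comp y \<Longrightarrow> Y x y = Y' x y"
    and "is_comp u" "is_comp v"
  shows "conv_tensor X Y u v = conv_tensor X' Y' u v"
  unfolding conv_tensor_def using assms by (intro sum.cong refl) simp

lemma comp_mult_character: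
  "is_character \<phi> \<Longrightarrow> is_comp u \<Longrightarrow> is_comp v \<Longrightarrow> comp_mult \<phi> u v = tensor \<phi> \<phi> u v"
  by (simp add: is_character_def comp_mult_def tensor_def)

lemma is_characterI:
  assumes "is_functional \<phi>" "\<phi> [] = 1"
    and "\<And>u v. is_comp u \<Longrightarrow> is_comp v \<Longrightarrow> comp_mult \<phi> u v = tensor \<phi> \<phi> u v"
  shows "is_character \<phi>"
  using assms by (simp add: is_character_def comp_mult_def tensor_def)

lemma sum_atMost_atMost_supported:
  assumes "S \<subseteq> {..n} \<times> {..m}"
    and "\<And>j k. j \<le> n \<Longrightarrow> k \<le> m \<Longrightarrow> (j, k) \<notin> S \<Longrightarrow> f j k = 0"
  shows "(\<Sum>j\<le>(n::nat). \<Sum>k\<le>(m::nat). f j k) = (\<Sum>(j, k)\<in>S. f j k :: 'a::comm_monoid_add)"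
  unfolding sum.cartesian_product using assms
  by (intro sum.mono_neutral_right) auto

lemma conv_tensor_diff:
  "conv_tensor P Y u v - conv_tensor Q Z u v = (\<Sum>j\<le>length u. \<Sum>k\<le>length v.
     P (take j u) (take k v) * Y (drop j u) (drop k v)
       - Q (take j u) (take k v) * Z (drop j u) (drop k v))"
  unfolding conv_tensor_def by (simp only: sum_subtractf)

lemma conv_tensor_cancel_right:
  fixes P Q Y :: "nat list \<Rightarrow> nat list \<Rightarrow> 'a::field"
  assumes Y: "Y [] [] = 1"
    and eq: "\<And>u v. is_comp u \<Longrightarrow> is_comp v \<Longrightarrow> conv_tensor P Y u v = conv_tensor Q Y u v"
  shows "is_comp u \<Longrightarrow> is_comp v \<Longrightarrow> P u v = Q u v"
proof (induction "length u + length v" arbitrary: u v rule: less_induct)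
  case less
  txt \<open>Triangularity: by induction only the term with (j, k) = (|u|, |v|) survives.\<close>
  have "P (take j u) (take k v) = Q (take j u) (take k v)"
    if "j \<le> length u" "k \<le> length v" "(j, k) \<noteq> (length u, length v)" for j k
    using that less by (intro less.hyps) auto
  then have "conv_tensor P Y u v - conv_tensor Q Y u v = P u v - Q u v"
    unfolding conv_tensor_diff
    by (subst sum_atMost_atMost_supported[where S="{(length u, length v)}"]) (auto simp: Y)
  then show ?case using eq[OF less.prems] by simp
qed

lemma conv_tensor_sqrt_unique:
  fixes P Q :: "nat list \<Rightarrow> nat list \<Rightarrow> 'a::field"
  assumes two: "(2::'a) \<noteq> 0" and P: "P [] [] = 1" and Q: "Q [] [] = 1"
    and eq: "\<And>u v. is_comp u \<Longrightarrow> is_comp v \<Longrightarrow> conv_tensor P P u v = conv_tensor Q Q u v"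
  shows "is_comp u \<Longrightarrow> is_comp v \<Longrightarrow> P u v = Q u v"
proof (induction "length u + length v" arbitrary: u v rule: less_induct)
  case less
  show ?case
  proof (cases "u = [] \<and> v = []")
    case nonempty: False
    txt \<open>Now P u v survives twice, for (j, k) = (0, 0) and (|u|, |v|), which is why
      2 \<noteq> 0 is needed.\<close>
    let ?S = "{(0, 0), (length u, length v)}"
    have "P (take j u) (take k v) = Q (take j u) (take k v)
        \<and> P (drop j u) (drop k v) = Q (drop j u) (drop k v)"
      if "j \<le> length u" "k \<le> length v" "(j, k) \<notin> ?S" for j k
      using that less by (auto intro!: less.hyps)
    then have "conv_tensor P P u v - conv_tensor Q Q u v = 2 * (P u v - Q u v)"
      unfolding conv_tensor_diff using nonempty
      by (subst sum_atMost_atMost_supported[where S="?S"]) (auto simp: P Q algebra_simps)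
    then show ?thesis using eq[OF less.prems] two by simp
  qed (use P Q in simp)
qed

section \<open>The group of characters\<close>

lemma is_character_functional: "is_character \<phi> \<Longrightarrow> is_functional \<phi>"
  and is_character_Nil: "is_character \<phi> \<Longrightarrow> \<phi> [] = 1"
  by (simp_all add: is_character_def)

lemma is_character_counit: "is_character (counit :: nat list \<Rightarrow> 'a::field)"
proof -
  have "(\<Sum>\<gamma>\<in>#qsh u v. counit \<gamma> :: 'a) = counit u * counit v" for u v
    by (induction u v rule: qsh.induct) (simp_all add: counit_def multiset.map_comp comp_def)
  then show ?thesis by (simp add: is_character_def)
qed

lemma is_character_conv:
  assumes \<rho>: "is_character \<rho>" and \<psi>: "is_character \<psi>"
  shows "is_character (conv \<rho> \<psi>)"
proof (rule is_characterI)
  fix u v :: "nat list" assume uv: "is_comp u" "is_comp v"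
  have "comp_mult (conv \<rho> \<psi>) u v = conv_tensor (comp_mult \<rho>) (comp_mult \<psi>) u v"
    using uv by (rule comp_mult_conv)
  also have "\<dots> = conv_tensor (tensor \<rho> \<rho>) (tensor \<psi> \<psi>) u v"
    using uv by (intro conv_tensor_cong) (simp_all add: comp_mult_character \<rho> \<psi>)
  also have "\<dots> = tensor (conv \<rho> \<psi>) (conv \<rho> \<psi>) u v"
    using uv by (simp add: conv_tensor_tensor tensor_def)
  finally show "comp_mult (conv \<rho> \<psi>) u v = tensor (conv \<rho> \<psi>) (conv \<rho> \<psi>) u v" .
qed (simp_all add: conv_Nil is_character_Nil \<rho> \<psi>)

function left_inverse :: "(nat list \<Rightarrow> 'a::field) \<Rightarrow> nat list \<Rightarrow> 'a" where
  "left_inverse \<phi> \<alpha> = (if \<not> is_comp \<alpha> then 0 else if \<alpha> = [] then 1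
     else - (\<Sum>i<length \<alpha>. left_inverse \<phi> (take i \<alpha>) * \<phi> (drop i \<alpha>)))"
  by auto
termination
  by (relation "measure (length \<circ> snd)") auto

declare left_inverse.simps [simp del]

lemma is_functional_left_inverse: "is_functional (left_inverse \<phi>)"
  by (simp add: is_functional_def left_inverse.simps)

lemma conv_left_inverse:
  assumes "\<phi> [] = 1"
  shows "conv (left_inverse \<phi>) \<phi> = counit"
proof
  fix \<alpha> :: "nat list"
  show "conv (left_inverse \<phi>) \<phi> \<alpha> = counit \<alpha>"
  proof (cases "is_comp \<alpha>")
    case True
    then have "conv (left_inverse \<phi>) \<phi> \<alpha>
        = (\<Sum>i<length \<alpha>. left_inverse \<phi> (take i \<alpha>) * \<phi> (drop i \<alpha>)) + left_inverse \<phi> \<alpha>"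
      using assms by (simp add: conv_def lessThan_Suc_atMost[symmetric])
    also have "\<dots> = counit \<alpha>"
      using True by (subst (2) left_inverse.simps) (simp add: counit_def)
    finally show ?thesis .
  qed (simp add: counit_not_comp)
qed

lemma is_character_left_inverse:
  assumes \<phi>: "is_character \<phi>"
  shows "is_character (left_inverse \<phi>)"
proof -
  let ?L = "left_inverse \<phi>"
  have L\<phi>: "conv ?L \<phi> = counit"
    using \<phi> by (simp add: conv_left_inverse is_character_Nil)
  have "comp_mult ?L u v = tensor ?L ?L u v" if uv: "is_comp u" "is_comp v" for u v
  proof (rule conv_tensor_cancel_right[where Y="comp_mult \<phi>"])
    fix u v :: "nat list" assume uv: "is_comp u" "is_comp v"
    have "conv_tensor (comp_mult ?L) (comp_mult \<phi>) u v = comp_mult counit u v"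
      using uv by (simp add: comp_mult_conv[symmetric] L\<phi>)
    also have "\<dots> = conv_tensor (tensor ?L ?L) (tensor \<phi> \<phi>) u v"
      using uv
      by (simp add: comp_mult_character is_character_counit conv_tensor_tensor L\<phi> tensor_def)
    also have "\<dots> = conv_tensor (tensor ?L ?L) (comp_mult \<phi>) u v"
      using uv by (intro conv_tensor_cong) (simp_all add: comp_mult_character \<phi>)
    finally show "conv_tensor (comp_mult ?L) (comp_mult \<phi>) u v
        = conv_tensor (tensor ?L ?L) (comp_mult \<phi>) u v" .
  qed (use uv \<phi> in \<open>simp_all add: comp_mult_def is_character_Nil\<close>)
  then show ?thesis
    using \<phi> L\<phi> conv_left_inverse[of ?L]
    by (intro is_characterI) (simp_all add: is_functional_left_inverse left_inverse.simps)
qed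

lemma inverse_unique:
  assumes "is_functional \<psi>" "conv \<psi> \<phi> = counit" "is_functional \<psi>'" "conv \<phi> \<psi>' = counit"
  shows "\<psi> = \<psi>'"
proof -
  have "\<psi> = conv \<psi> (conv \<phi> \<psi>')" using assms by (simp add: conv_counit_right)
  also have "\<dots> = conv (conv \<psi> \<phi>) \<psi>'" by (simp add: conv_assoc)
  also have "\<dots> = \<psi>'" using assms by (simp add: conv_counit_left)
  finally show ?thesis .
qed

lemma character_inverse_exists:
  assumes \<phi>: "is_character \<phi>"
  shows "\<exists>\<psi>. is_character \<psi> \<and> conv \<phi> \<psi> = counit \<and> conv \<psi> \<phi> = counit"
proof -
  let ?L = "left_inverse \<phi>"
  have L: "is_character ?L" "conv ?L \<phi> = counit"
    using \<phi> by (simp_all add: is_character_left_inverse conv_left_inverse is_character_Nil)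
  have "left_inverse ?L = \<phi>"
    by (rule inverse_unique[where \<phi>="?L"])
      (use L \<phi> in \<open>simp_all add: is_functional_left_inverse conv_left_inverse is_character_Nil
        is_character_functional\<close>)
  then have "conv \<phi> ?L = counit"
    using conv_left_inverse[of ?L] L by (simp add: is_character_Nil)
  with L show ?thesis by blast
qed

lemma
  assumes "is_character \<phi>"
  shows is_character_char_inv: "is_character (char_inv \<phi>)"
    and conv_char_inv_right: "conv \<phi> (char_inv \<phi>) = counit"
    and conv_char_inv_left: "conv (char_inv \<phi>) \<phi> = counit"
proof -
  obtain \<psi> where \<psi>: "is_character \<psi>" "conv \<phi> \<psi> = counit" "conv \<psi> \<phi> = counit"
    using character_inverse_exists[OF assms] by blast
  have "char_inv \<phi> = \<psi>"
    unfolding char_inv_def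
  proof (rule the_equality)
    fix \<psi>' assume "is_character \<psi>' \<and> conv \<phi> \<psi>' = counit \<and> conv \<psi>' \<phi> = counit"
    with \<psi> show "\<psi>' = \<psi>"
      by (metis inverse_unique is_character_functional)
  qed (use \<psi> in simp)
  with \<psi> show "is_character (char_inv \<phi>)" "conv \<phi> (char_inv \<phi>) = counit"
      "conv (char_inv \<phi>) \<phi> = counit"
    by simp_all
qed

lemma char_inv_eqI:
  assumes "is_character \<phi>" "is_functional \<psi>" "conv \<phi> \<psi> = counit"
  shows "char_inv \<phi> = \<psi>"
  by (rule inverse_unique[of _ \<phi>])
    (use assms in \<open>simp_all add: is_character_char_inv conv_char_inv_left is_character_functional\<close>)

lemma char_inv_char_inv: "is_character \<phi> \<Longrightarrow> char_inv (char_inv \<phi>) = \<phi>"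
  by (rule char_inv_eqI)
    (simp_all add: is_character_char_inv conv_char_inv_left is_character_functional)

lemma char_inv_conv:
  assumes \<rho>: "is_character \<rho>" and \<psi>: "is_character \<psi>"
  shows "char_inv (conv \<rho> \<psi>) = conv (char_inv \<psi>) (char_inv \<rho>)"
proof (rule char_inv_eqI)
  have "conv (conv \<rho> \<psi>) (conv (char_inv \<psi>) (char_inv \<rho>))
      = conv \<rho> (conv (conv \<psi> (char_inv \<psi>)) (char_inv \<rho>))"
    by (simp add: conv_assoc)
  also have "\<dots> = counit"
    using assms by (simp add: conv_char_inv_right conv_counit_left is_character_char_inv
        is_character_functional)
  finally show "conv (conv \<rho> \<psi>) (conv (char_inv \<psi>) (char_inv \<rho>)) = counit" .
qed (simp_all add: is_character_conv assms)

lemma conv_cancel_right: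
  assumes "is_character \<chi>" "is_functional \<rho>" "is_functional \<psi>" "conv \<rho> \<chi> = conv \<psi> \<chi>"
  shows "\<rho> = \<psi>"
proof -
  have "\<rho> = conv \<rho> (conv \<chi> (char_inv \<chi>))"
    using assms(1,2) by (simp add: conv_char_inv_right conv_counit_right)
  also have "\<dots> = conv (conv \<psi> \<chi>) (char_inv \<chi>)"
    by (simp only: conv_assoc[symmetric] assms(4))
  also have "\<dots> = \<psi>"
    using assms(1,3) by (simp add: conv_assoc conv_char_inv_right conv_counit_right)
  finally show ?thesis .
qed

lemma bar_conv: "bar (conv \<rho> \<psi>) = conv (bar \<rho>) (bar \<psi>)"
proof
  fix \<alpha> :: "nat list"
  have "(-1::'a) ^ sum_list \<alpha> = (-1) ^ sum_list (take i \<alpha>) * (-1) ^ sum_list (drop i \<alpha>)" for i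
    by (metis sum_list_take_drop power_add)
  then show "bar (conv \<rho> \<psi>) \<alpha> = conv (bar \<rho>) (bar \<psi>) \<alpha>"
    unfolding bar_def conv_def by (simp add: sum_distrib_left mult_ac)
qed

lemma bar_counit: "bar counit = counit"
  by (rule ext) (simp add: bar_def counit_def)

lemma bar_bar: "bar (bar \<phi>) = \<phi>"
proof
  fix \<alpha> :: "nat list"
  have "((-1::'a) ^ sum_list \<alpha>) * ((-1) ^ sum_list \<alpha>) = 1"
    by (simp flip: power_add)
  then show "bar (bar \<phi>) \<alpha> = \<phi> \<alpha>" unfolding bar_def by (simp flip: mult.assoc)
qed

lemma is_character_bar:
  assumes \<phi>: "is_character \<phi>"
  shows "is_character (bar \<phi>)"
proof -
  have "bar \<phi> \<alpha> * bar \<phi> \<beta> = (\<Sum>\<gamma>\<in>#qsh \<alpha> \<beta>. bar \<phi> \<gamma>)" if "is_comp \<alpha>" "is_comp \<beta>" for \<alpha> \<beta>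
  proof -
    have "(\<Sum>\<gamma>\<in>#qsh \<alpha> \<beta>. bar \<phi> \<gamma>)
        = (\<Sum>\<gamma>\<in>#qsh \<alpha> \<beta>. (-1) ^ (sum_list \<alpha> + sum_list \<beta>) * \<phi> \<gamma>)"
      unfolding bar_def
      by (intro arg_cong[where f=sum_mset] image_mset_cong) (simp add: sum_list_qsh)
    also have "\<dots> = (-1) ^ (sum_list \<alpha> + sum_list \<beta>) * (\<phi> \<alpha> * \<phi> \<beta>)"
      using \<phi> that by (simp add: is_character_def sum_mset_distrib_left)
    finally show ?thesis by (simp add: bar_def power_add mult_ac)
  qed
  with \<phi> show ?thesis by (simp add: is_character_def is_functional_def bar_def)
qed

lemma bar_char_inv:
  assumes "is_character \<phi>"
  shows "bar (char_inv \<phi>) = char_inv (bar \<phi>)"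
proof (rule char_inv_eqI[symmetric])
  show "conv (bar \<phi>) (bar (char_inv \<phi>)) = counit"
    using assms by (simp add: conv_char_inv_right bar_counit flip: bar_conv)
qed (simp_all add: assms is_character_bar is_character_char_inv is_character_functional)

section \<open>Square roots and the even-odd decomposition\<close>

text \<open>Solves conv s s = \<chi> by recursion on the length: the terms i = 0 and i = |\<alpha>| of
  conv s s \<alpha> both equal s \<alpha>.\<close>

function conv_sqrt :: "(nat list \<Rightarrow> 'a::field) \<Rightarrow> nat list \<Rightarrow> 'a" where
  "conv_sqrt \<chi> \<alpha> = (if \<not> is_comp \<alpha> then 0 else if \<alpha> = [] then 1
     else (\<chi> \<alpha> - (\<Sum>i\<in>{1..<length \<alpha>}. conv_sqrt \<chi> (take i \<alpha>) * conv_sqrt \<chi> (drop i \<alpha>))) / 2)"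
  by auto
termination
  by (relation "measure (length \<circ> snd)") auto

declare conv_sqrt.simps [simp del]

lemma is_functional_conv_sqrt: "is_functional (conv_sqrt \<chi>)"
  by (simp add: is_functional_def conv_sqrt.simps)

lemma conv_sqrt_Nil [simp]: "conv_sqrt \<chi> [] = 1"
  by (simp add: conv_sqrt.simps)

lemma sum_atMost_ends:
  fixes n :: nat
  assumes "0 < n"
  shows "(\<Sum>i\<le>n. f i) = f 0 + (\<Sum>i\<in>{1..<n}. f i) + (f n :: 'a::comm_monoid_add)"
proof -
  obtain k where n: "n = Suc k" using assms gr0_conv_Suc by blast
  have "(\<Sum>i\<in>{1..<n}. f i) = (\<Sum>i<k. f (Suc i))"
    unfolding n atLeastLessThanSuc_atLeastAtMost One_nat_def by (rule sum.atLeast1_atMost_eq)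
  then show ?thesis
    unfolding n sum.atMost_Suc sum.atMost_shift[of f k] by (simp add: add_ac)
qed

lemma conv_sqrt_square:
  assumes two: "(2::'a::field) \<noteq> 0" and \<chi>: "is_functional \<chi>" "\<chi> [] = 1"
  shows "conv (conv_sqrt \<chi>) (conv_sqrt \<chi>) = (\<chi> :: nat list \<Rightarrow> 'a)"
proof
  fix \<alpha> :: "nat list"
  let ?s = "conv_sqrt \<chi>"
  show "conv ?s ?s \<alpha> = \<chi> \<alpha>"
  proof (cases "is_comp \<alpha> \<and> \<alpha> \<noteq> []")
    case True
    let ?mid = "\<Sum>i\<in>{1..<length \<alpha>}. ?s (take i \<alpha>) * ?s (drop i \<alpha>)"
    have "conv ?s ?s \<alpha> = 2 * ?s \<alpha> + ?mid"
      using True by (simp add: conv_def sum_atMost_ends)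
    also have "?s \<alpha> = (\<chi> \<alpha> - ?mid) / 2"
      using True by (subst conv_sqrt.simps) simp
    also have "2 * ((\<chi> \<alpha> - ?mid) / 2) + ?mid = \<chi> \<alpha>"
      by (simp only: times_divide_eq_right nonzero_mult_div_cancel_left[OF two] diff_add_cancel)
    finally show ?thesis .
  next
    case False
    then consider "\<alpha> = []" | "\<not> is_comp \<alpha>" by blast
    then show ?thesis
      by cases (simp_all add: conv_Nil \<chi> is_functionalD[OF \<chi>(1)])
  qed
qed

lemma is_character_conv_sqrt:
  assumes two: "(2::'a::field) \<noteq> 0" and \<chi>: "is_character (\<chi> :: nat list \<Rightarrow> 'a)"
  shows "is_character (conv_sqrt \<chi>)"
proof (rule is_characterI)
  let ?s = "conv_sqrt \<chi>"
  have sq: "conv ?s ?s = \<chi>"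
    using two \<chi> by (simp add: conv_sqrt_square is_character_functional is_character_Nil)
  fix u v :: "nat list" assume "is_comp u" "is_comp v"
  show "comp_mult ?s u v = tensor ?s ?s u v"
  proof (rule conv_tensor_sqrt_unique[OF two])
    fix u v :: "nat list" assume uv: "is_comp u" "is_comp v"
    have "conv_tensor (comp_mult ?s) (comp_mult ?s) u v = comp_mult \<chi> u v"
      using uv by (simp add: comp_mult_conv[symmetric] sq)
    also have "\<dots> = conv_tensor (tensor ?s ?s) (tensor ?s ?s) u v"
      using uv \<chi> by (simp add: comp_mult_character conv_tensor_tensor sq tensor_def)
    finally show "conv_tensor (comp_mult ?s) (comp_mult ?s) u v
        = conv_tensor (tensor ?s ?s) (tensor ?s ?s) u v" .
  qed (simp_all add: comp_mult_def tensor_def \<open>is_comp u\<close> \<open>is_comp v\<close>)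
qed (simp_all add: is_functional_conv_sqrt)

lemma conv_square_unique:
  fixes \<rho> \<psi> :: "nat list \<Rightarrow> 'a::field"
  assumes two: "(2::'a) \<noteq> 0"
    and \<rho>: "is_functional \<rho>" "\<rho> [] = 1" and \<psi>: "is_functional \<psi>" "\<psi> [] = 1"
    and eq: "conv \<rho> \<rho> = conv \<psi> \<psi>"
  shows "\<rho> = \<psi>"
proof
  fix \<alpha> :: "nat list"
  show "\<rho> \<alpha> = \<psi> \<alpha>"
  proof (cases "is_comp \<alpha>")
    case True
    have "tensor \<rho> counit \<alpha> [] = tensor \<psi> counit \<alpha> []"
    proof (rule conv_tensor_sqrt_unique[OF two])
      fix u v :: "nat list" assume "is_comp u" "is_comp v"
      then show "conv_tensor (tensor \<rho> counit) (tensor \<rho> counit) u v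
          = conv_tensor (tensor \<psi> counit) (tensor \<psi> counit) u v"
        by (simp add: conv_tensor_tensor eq)
    qed (simp_all add: tensor_def \<rho> \<psi> True)
    then show ?thesis by (simp add: tensor_def)
  qed (simp add: is_functionalD[OF \<rho>(1)] is_functionalD[OF \<psi>(1)])
qed

definition even_odd_decomp ::
    "(nat list \<Rightarrow> 'a::field) \<Rightarrow> (nat list \<Rightarrow> 'a) \<Rightarrow> (nat list \<Rightarrow> 'a) \<Rightarrow> bool" where
  "even_odd_decomp \<phi> p m \<longleftrightarrow>
     is_character p \<and> is_even p \<and> is_character m \<and> is_odd m \<and> \<phi> = conv p m"

lemma even_odd_decomp_square:
  assumes "even_odd_decomp \<phi> p m"
  shows "conv m m = conv (char_inv (bar \<phi>)) \<phi>"
proof -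
  have p: "is_character p" "bar p = p" and m: "is_character m" "bar m = char_inv m"
    and \<phi>: "\<phi> = conv p m"
    using assms by (simp_all add: even_odd_decomp_def is_even_def is_odd_def)
  have "char_inv (bar \<phi>) = char_inv (conv p (char_inv m))"
    by (simp add: \<phi> bar_conv p m)
  also have "\<dots> = conv m (char_inv p)"
    using p m by (simp add: char_inv_conv is_character_char_inv char_inv_char_inv)
  finally have "conv (char_inv (bar \<phi>)) \<phi> = conv m (conv (conv (char_inv p) p) m)"
    by (simp add: \<phi> conv_assoc)
  also have "\<dots> = conv m m"
    using p m by (simp add: conv_char_inv_left conv_counit_left is_character_functional)
  finally show ?thesis by simp
qed

lemma even_odd_decomp_unique:
  fixes \<phi> :: "nat list \<Rightarrow> 'a::field"
  assumes two: "(2::'a) \<noteq> 0" and d: "even_odd_decomp \<phi> p m" and d': "even_odd_decomp \<phi> p' m'"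
  shows "p = p' \<and> m = m'"
proof -
  have chars: "is_character p" "is_character m" "is_character p'" "is_character m'"
    using d d' by (simp_all add: even_odd_decomp_def)
  have mm': "m = m'"
    by (rule conv_square_unique[OF two])
      (use chars in \<open>simp_all add: is_character_functional is_character_Nil
        even_odd_decomp_square[OF d] even_odd_decomp_square[OF d']\<close>)
  have "p = p'"
    by (rule conv_cancel_right[of m'])
      (use d d' chars mm' in \<open>simp_all add: even_odd_decomp_def is_character_functional\<close>)
  with mm' show ?thesis by simp
qed

lemma even_odd_decomp_exists:
  fixes \<phi> :: "nat list \<Rightarrow> 'a::field"
  assumes two: "(2::'a) \<noteq> 0" and \<phi>: "is_character \<phi>"
  shows "\<exists>p m. even_odd_decomp \<phi> p m"
proof -
  define \<chi> where "\<chi> = conv (char_inv (bar \<phi>)) \<phi>"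
  define m where "m = conv_sqrt \<chi>"
  define p where "p = conv \<phi> (char_inv m)"
  have b\<phi>: "is_character (bar \<phi>)" using \<phi> by (rule is_character_bar)
  have \<chi>: "is_character \<chi>"
    unfolding \<chi>_def using b\<phi> \<phi> by (simp add: is_character_conv is_character_char_inv)
  have m: "is_character m" "conv m m = \<chi>"
    unfolding m_def using two \<chi>
    by (simp_all add: is_character_conv_sqrt conv_sqrt_square is_character_functional
        is_character_Nil)
  have p: "is_character p"
    unfolding p_def using \<phi> m by (simp add: is_character_conv is_character_char_inv)
  have "\<phi> = conv (conv (bar \<phi>) (char_inv (bar \<phi>))) \<phi>"
    using b\<phi> \<phi> by (simp add: conv_char_inv_right conv_counit_left is_character_functional)
  then have \<phi>_eq: "\<phi> = conv (bar \<phi>) (conv m m)"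
    by (simp add: m \<chi>_def conv_assoc)
  have odd: "bar m = char_inv m"
  proof (rule conv_square_unique[OF two])
    have "conv (bar m) (bar m) = bar \<chi>"
      by (simp add: m flip: bar_conv)
    also have "\<dots> = conv (char_inv \<phi>) (bar \<phi>)"
      unfolding \<chi>_def using b\<phi> by (simp add: bar_conv bar_char_inv bar_bar)
    also have "\<dots> = char_inv \<chi>"
      unfolding \<chi>_def using \<phi> b\<phi>
      by (simp add: char_inv_conv is_character_char_inv char_inv_char_inv)
    also have "\<dots> = conv (char_inv m) (char_inv m)"
      using m by (simp add: char_inv_conv flip: m(2))
    finally show "conv (bar m) (bar m) = conv (char_inv m) (char_inv m)" .
  qed (use m in \<open>simp_all add: is_character_bar is_character_char_inv is_character_functional
      is_character_Nil\<close>)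
  have "bar p = conv (bar \<phi>) m"
    unfolding p_def using m odd by (simp add: bar_conv bar_char_inv char_inv_char_inv)
  also have "\<dots> = conv (conv (bar \<phi>) (conv m m)) (char_inv m)"
    using m(1)
    by (simp add: conv_assoc conv_char_inv_right conv_counit_right is_character_functional)
  also have "\<dots> = p"
    unfolding p_def by (simp flip: \<phi>_eq)
  finally have even: "bar p = p" .
  have "\<phi> = conv p m"
    using m \<phi>
    by (simp add: p_def conv_assoc conv_char_inv_left conv_counit_right is_character_functional)
  with p m odd even show ?thesis
    unfolding even_odd_decomp_def is_even_def is_odd_def by blast
qed

lemma even_odd_decomp_parts:
  fixes \<phi> :: "nat list \<Rightarrow> 'a::field"
  assumes two: "(2::'a) \<noteq> 0" and d: "even_odd_decomp \<phi> p m"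
  shows "even_part \<phi> = p" and "odd_part \<phi> = m"
proof -
  have "\<And>p' m'. even_odd_decomp \<phi> p' m' \<Longrightarrow> p' = p \<and> m' = m"
    using even_odd_decomp_unique[OF two d] by metis
  with d show "even_part \<phi> = p" "odd_part \<phi> = m"
    unfolding even_part_def odd_part_def
    by (auto simp: even_odd_decomp_def)
qed

lemma is_even_char_inv: "is_character p \<Longrightarrow> is_even p \<Longrightarrow> is_even (char_inv p)"
  by (simp add: is_even_def bar_char_inv)

lemma is_odd_char_inv: "is_character m \<Longrightarrow> is_odd m \<Longrightarrow> is_odd (char_inv m)"
  by (simp add: is_odd_def bar_char_inv)

lemma is_odd_conjugate:
  assumes p: "is_character p" "is_even p" and m: "is_character m" "is_odd m"
  shows "is_odd (conv p (conv m (char_inv p)))"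
proof -
  have "bar (conv p (conv m (char_inv p))) = conv p (conv (char_inv m) (char_inv p))"
    using assms by (simp add: bar_conv bar_char_inv is_even_def is_odd_def)
  also have "\<dots> = char_inv (conv p (conv m (char_inv p)))"
    using assms
    by (simp add: char_inv_conv char_inv_char_inv is_character_conv is_character_char_inv
        conv_assoc)
  finally show ?thesis unfolding is_odd_def .
qed

lemma even_part_char_inv:
  fixes \<phi> :: "nat list \<Rightarrow> 'a::field"
  assumes two: "(2::'a) \<noteq> 0" and \<phi>: "is_character \<phi>"
  shows "even_part (char_inv \<phi>) = char_inv (even_part \<phi>)"
proof -
  obtain p m where d: "even_odd_decomp \<phi> p m"
    using even_odd_decomp_exists[OF two \<phi>] by blast
  then have p: "is_character p" "is_even p" and m: "is_character m" "is_odd m"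
    and \<phi>_eq: "\<phi> = conv p m"
    by (simp_all add: even_odd_decomp_def)
  let ?m' = "conv p (conv (char_inv m) (char_inv p))"
  have "char_inv \<phi> = conv (char_inv p) (conv (conv p (char_inv m)) (char_inv p))"
    using p m by (simp add: \<phi>_eq char_inv_conv flip: conv_assoc)
      (simp add: conv_char_inv_left conv_counit_left is_character_functional is_character_char_inv)
  then have "even_odd_decomp (char_inv \<phi>) (char_inv p) ?m'"
    using p m unfolding even_odd_decomp_def
    by (simp add: is_even_char_inv is_odd_char_inv is_odd_conjugate is_character_conv
        is_character_char_inv conv_assoc)
  then show ?thesis
    using even_odd_decomp_parts[OF two] d by metis
qed

section \<open>Reversal\<close>

text \<open>\<open>rev_fun \<psi>\<close> is \<psi> \<circ> T: by \<open>evalF_rev\<close> below, T reverses the monomial basis too.\<close>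

definition rev_fun :: "(nat list \<Rightarrow> 'a) \<Rightarrow> nat list \<Rightarrow> 'a" where
  "rev_fun \<phi> \<alpha> = \<phi> (rev \<alpha>)"

lemma rev_fun_conv: "rev_fun (conv \<rho> \<psi>) = conv (rev_fun \<psi>) (rev_fun \<rho>)"
proof
  fix \<alpha> :: "nat list"
  let ?n = "length \<alpha>"
  have "(\<Sum>i\<le>?n. \<rho> (rev (drop (?n - i) \<alpha>)) * \<psi> (rev (take (?n - i) \<alpha>)))
      = (\<Sum>i\<le>?n. \<rho> (rev (drop i \<alpha>)) * \<psi> (rev (take i \<alpha>)))"
    by (rule sum.reindex_bij_witness[where i="\<lambda>i. ?n - i" and j="\<lambda>i. ?n - i"]) auto
  then show "rev_fun (conv \<rho> \<psi>) \<alpha> = conv (rev_fun \<psi>) (rev_fun \<rho>) \<alpha>"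
    by (simp add: rev_fun_def conv_def take_rev drop_rev mult.commute)
qed

lemma rev_fun_counit: "rev_fun counit = counit"
  by (rule ext) (simp add: rev_fun_def counit_def)

lemma rev_fun_bar: "rev_fun (bar \<phi>) = bar (rev_fun \<phi>)"
  by (rule ext) (simp add: rev_fun_def bar_def)

lemma rev_fun_zeta: "rev_fun zeta = zeta"
  by (rule ext) (simp add: rev_fun_def zeta_def)

lemma is_character_rev_fun:
  assumes \<phi>: "is_character \<phi>"
  shows "is_character (rev_fun \<phi>)"
proof -
  have "rev_fun \<phi> \<alpha> * rev_fun \<phi> \<beta> = (\<Sum>\<gamma>\<in>#qsh \<alpha> \<beta>. rev_fun \<phi> \<gamma>)"
    if "is_comp \<alpha>" "is_comp \<beta>" for \<alpha> \<beta>
    using \<phi> that by (simp add: rev_fun_def is_character_def qsh_rev multiset.map_comp comp_def)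
  with \<phi> show ?thesis by (simp add: is_character_def is_functional_def rev_fun_def)
qed

lemma rev_fun_char_inv: "is_character \<phi> \<Longrightarrow> rev_fun (char_inv \<phi>) = char_inv (rev_fun \<phi>)"
  by (rule char_inv_eqI[symmetric])
    (simp_all add: is_character_rev_fun is_character_char_inv is_character_functional
      conv_char_inv_left rev_fun_counit flip: rev_fun_conv)

lemma even_odd_decomp_char_inv_rev_fun:
  assumes "even_odd_decomp \<phi> p m"
  shows "even_odd_decomp (char_inv (rev_fun \<phi>)) (char_inv (rev_fun p)) (char_inv (rev_fun m))"
proof -
  have p: "is_character (rev_fun p)" "is_even (rev_fun p)"
    and m: "is_character (rev_fun m)" "is_odd (rev_fun m)"
    and \<phi>: "rev_fun \<phi> = conv (rev_fun m) (rev_fun p)"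
    using assms
    by (auto simp: even_odd_decomp_def is_even_def is_odd_def is_character_rev_fun rev_fun_conv
        rev_fun_char_inv simp flip: rev_fun_bar)
  show ?thesis
    unfolding even_odd_decomp_def using p m
    by (simp add: \<phi> char_inv_conv is_even_char_inv is_odd_char_inv is_character_char_inv)
qed

lemma is_character_zeta: "is_character (zeta :: nat list \<Rightarrow> 'a::field)"
proof -
  have "zeta \<alpha> * zeta \<beta> = (\<Sum>\<gamma>\<in>#qsh \<alpha> \<beta>. zeta \<gamma> :: 'a)" if "is_comp \<alpha>" "is_comp \<beta>" for \<alpha> \<beta>
  proof (cases "\<alpha> = [] \<or> \<beta> = []")
    case False
    show ?thesis
    proof (cases "length \<alpha> = 1 \<and> length \<beta> = 1")
      case True
      then obtain a b where "\<alpha> = [a]" "\<beta> = [b]"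
        by (auto simp: length_Suc_conv)
      with that show ?thesis by (simp add: zeta_def)
    next
      case long: False
      have "length \<alpha> \<noteq> 0" "length \<beta> \<noteq> 0" using False by auto
      with long have "1 < length \<alpha> \<or> 1 < length \<beta>" by arith
      then have "zeta \<gamma> = (0::'a)" if "\<gamma> \<in># qsh \<alpha> \<beta>" for \<gamma>
        using length_qsh[OF that] by (auto simp: zeta_def)
      moreover have "zeta \<alpha> * zeta \<beta> = (0::'a)"
        using \<open>1 < length \<alpha> \<or> 1 < length \<beta>\<close> by (auto simp: zeta_def)
      ultimately show ?thesis by (simp add: sum_mset.neutral)
    qed
  qed (auto simp: zeta_def)
  then show ?thesis by (simp add: is_character_def is_functional_def zeta_def)
qed

lemma sum_list_take_rev:
  "sum_list (take i (rev \<alpha>)) = sum_list \<alpha> - sum_list (take (length \<alpha> - i) (\<alpha> :: nat list))"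
  using sum_list_take_drop[of "length \<alpha> - i" \<alpha>] by (simp add: take_rev)

lemma psums_eq_image: "psums \<alpha> = (\<lambda>i. sum_list (take i \<alpha>)) ` {..length \<alpha>}"
  by (auto simp: psums_def)

lemma psums_rev: "psums (rev \<alpha>) = (\<lambda>x. sum_list \<alpha> - x) ` psums \<alpha>"
proof -
  let ?n = "length \<alpha>"
  have flip: "(\<lambda>i. ?n - i) ` {..?n} = {..?n}"
    by (auto simp: image_iff) (metis atMost_iff diff_diff_cancel diff_le_self)
  have "psums (rev \<alpha>) = (\<lambda>i. sum_list \<alpha> - sum_list (take i \<alpha>)) ` ((\<lambda>i. ?n - i) ` {..?n})"
    unfolding psums_eq_image sum_list_take_rev length_rev image_image ..
  then show ?thesis
    unfolding flip psums_eq_image image_image .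
qed

lemma psums_le_sum_list: "x \<in> psums \<alpha> \<Longrightarrow> x \<le> sum_list (\<alpha> :: nat list)"
  unfolding psums_eq_image by (auto intro: ord_le_eq_trans[OF le_add1 sum_list_take_drop])

lemma refines_rev: "refines (rev \<beta>) (rev \<alpha>) \<longleftrightarrow> refines \<beta> \<alpha>"
proof (cases "sum_list \<beta> = sum_list \<alpha>")
  case True
  have inj: "inj_on (\<lambda>x. sum_list \<alpha> - x) (psums \<alpha> \<union> psums \<beta>)"
    using True by (intro inj_onI) (auto dest!: psums_le_sum_list)
  show ?thesis
    using True by (auto simp: refines_def psums_rev image_subset_iff inj_on_image_mem_iff[OF inj])
qed (simp add: refines_def)

lemma evalF_rev: "evalF \<phi> (rev \<alpha>) = evalF (rev_fun \<phi>) \<alpha>"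
  unfolding evalF_def rev_fun_def
proof (rule sum.reindex_bij_witness[where i=rev and j=rev])
  fix \<beta> assume "\<beta> \<in> {\<beta>. is_comp \<beta> \<and> refines \<beta> (rev \<alpha>)}"
  then show "rev \<beta> \<in> {\<beta>. is_comp \<beta> \<and> refines \<beta> \<alpha>}"
    using refines_rev[of "rev \<beta>" \<alpha>] by simp
qed (simp_all add: refines_rev)

theorem proposition8p2:
  assumes "(2::'a::field) \<noteq> 0"
  shows "(\<forall>\<alpha>. is_comp \<alpha> \<longrightarrow>
            evalF (even_part (zeta :: nat list \<Rightarrow> 'a)) (rev \<alpha>) = evalF (even_part zeta) \<alpha>)
       \<and> (\<forall>\<alpha>. is_comp \<alpha> \<longrightarrow>
            evalF (odd_part (zeta :: nat list \<Rightarrow> 'a)) (rev \<alpha>)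
              = evalF (char_inv (odd_part (char_inv (zeta :: nat list \<Rightarrow> 'a)))) \<alpha>)"
proof -
  let ?z = "zeta :: nat list \<Rightarrow> 'a"
  obtain p m where d: "even_odd_decomp ?z p m"
    using even_odd_decomp_exists[OF assms is_character_zeta] by blast
  have chars: "is_character p" "is_character m"
    using d by (simp_all add: even_odd_decomp_def)
  have d_inv: "even_odd_decomp (char_inv ?z) (char_inv (rev_fun p)) (char_inv (rev_fun m))"
    using even_odd_decomp_char_inv_rev_fun[OF d] by (simp add: rev_fun_zeta)
  have "char_inv (rev_fun p) = char_inv p"
    using even_part_char_inv[OF assms is_character_zeta]
    by (simp add: even_odd_decomp_parts[OF assms d] even_odd_decomp_parts[OF assms d_inv])
  then have "rev_fun p = p"
    by (metis chars(1) char_inv_char_inv is_character_rev_fun)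
  moreover have "char_inv (odd_part (char_inv ?z)) = rev_fun m"
    using chars
    by (simp add: even_odd_decomp_parts[OF assms d_inv] char_inv_char_inv is_character_rev_fun)
  ultimately show ?thesis
    by (simp add: evalF_rev even_odd_decomp_parts[OF assms d])
qed

end
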